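(* Let $\lambda_1\ge0$ and $\lambda_2=0$. Let $P_n$ be the monic orthogonal polynomials for $\langle f,g\rangle_F=\int_{\mathbb R}fg\,e^{-x^4}dx$, $k_n=\langle P_n,P_n\rangle_F$, and let $Q_n$ be the monic orthogonal polynomials for $\langle f,g\rangle_S=\int_{\mathbb R}fg\,e^{-x^4}dx+\lambda_1 f(0)g(0)$, $\widehat k_n=\langle Q_n,Q_n\rangle_S$. Then $Q_0(x)=1$, $Q_1(x)=x$, and for all $n\ge1$, $$xP_n(x)=Q_{n+1}(x)+a_nQ_{n-1}(x),\qquad xQ_n(x)=P_{n+1}(x)+b_nP_{n-1}(x),$$ where $a_n=\dfrac{k_n}{\widehat k_{n-1}}$ and $b_n=\dfrac{\widehat k_n}{k_{n-1}}$.
   Context: All polynomials are real; "monic orthogonal polynomials" means $\deg P_n=\deg Q_n=n$ with leading coefficient $1$ and orthogonality to all polynomials of lower degree in the respective inner product. *)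

theory Defs
  imports "HOL-Analysis.Analysis" "HOL-Computational_Algebra.Polynomial"
begin

definition inner_F :: "real poly \<Rightarrow> real poly \<Rightarrow> real" where
  "inner_F f g = (\<integral>x. poly f x * poly g x * exp (- (x ^ 4)) \<partial>lborel)"

definition inner_S :: "real \<Rightarrow> real poly \<Rightarrow> real poly \<Rightarrow> real" where
  "inner_S lam1 f g = inner_F f g + lam1 * poly f 0 * poly g 0"

definition monic_OPS :: "(real poly \<Rightarrow> real poly \<Rightarrow> real) \<Rightarrow> (nat \<Rightarrow> real poly) \<Rightarrow> bool" where
  "monic_OPS ip p \<longleftrightarrow>
     (\<forall>n. degree (p n) = n \<and> lead_coeff (p n) = 1 \<and>
          (\<forall>q. degree q < n \<longrightarrow> ip (p n) q = 0))"

end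

theory Submission
  imports Defs "HOL-Probability.Probability"
begin

text \<open>
  Both inner products have the form (f, g) \<mapsto> F (f * g) for a linear functional F on
  polynomials that is invariant under x \<mapsto> -x and definite, and the two functionals agree
  on every multiple of x, since the point mass at 0 does not see x h. Evenness gives P n
  and Q n the parity of n. The polynomial R = x P n - Q (n+1) - a Q (n-1) has degree at
  most n, and agreement on multiples of x turns the Sobolev product of R with Q m into
  the Freud product of P n with x Q m minus a multiple of Q (n-1). For m < n - 1 this
  vanishes by degree, for m = n by parity, and for m = n - 1 the Freud part equals the
  Freud norm of P n, which the choice of a cancels. So R is orthogonal to Q 0, ..., Q n,
  hence zero. Exchanging the roles of the two functionals gives the second relation.
\<close>

lemma degree_diff_smult_lead_less:
  fixes a b :: "'a::comm_ring_1 poly"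
  assumes "degree a \<le> n" "degree b = n" "lead_coeff b = 1"
  shows "a - smult (coeff a n) b = 0 \<or> degree (a - smult (coeff a n) b) < n"
proof -
  let ?r = "a - smult (coeff a n) b"
  have "degree ?r < n" if "?r \<noteq> 0"
  proof -
    have "coeff ?r (degree ?r) \<noteq> 0" using that by (rule leading_coeff_neq_0)
    moreover have "coeff ?r n = 0" using assms by simp
    moreover have "degree ?r \<le> n"
      using assms by (intro degree_diff_le) (auto intro: order.trans[OF degree_smult_le])
    ultimately show ?thesis by (metis le_neq_implies_less)
  qed
  then show ?thesis by blast
qed

locale symmetric_definite_functional =
  fixes F :: "real poly \<Rightarrow> real"
  assumes add: "F (a + b) = F a + F b"
    and smult: "F (smult c a) = c * F a"
    and reflect_invariant: "F (a \<circ>\<^sub>p [:0, -1:]) = F a"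
    and definite: "F (f * f) = 0 \<Longrightarrow> f = 0"
begin

lemma zero [simp]: "F 0 = 0"
  using smult[of 0 0] by simp

lemma uminus: "F (- a) = - F a"
  using smult[of "-1" a] by simp

lemma diff: "F (a - b) = F a - F b"
  using add[of a "- b"] uminus[of b] by simp

lemma odd_eq_0: "h \<circ>\<^sub>p [:0, -1:] = - h \<Longrightarrow> F h = 0"
  using reflect_invariant[of h] uminus[of h] by simp

context
  fixes p :: "nat \<Rightarrow> real poly"
  assumes mops: "monic_OPS (\<lambda>f g. F (f * g)) p"
begin

lemma degree_mops: "degree (p n) = n"
  using mops unfolding monic_OPS_def by blast

lemma lead_coeff_mops: "lead_coeff (p n) = 1"
  using mops unfolding monic_OPS_def by blast

lemma mops_nonzero: "p n \<noteq> 0"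
  using lead_coeff_mops[of n] by auto

lemma mops_orthogonal_lower: "q = 0 \<or> degree q < n \<Longrightarrow> F (p n * q) = 0"
  using mops unfolding monic_OPS_def by auto

lemma mops_orthogonal: "j \<noteq> k \<Longrightarrow> F (p j * p k) = 0"
  using mops_orthogonal_lower[of "p k" j] mops_orthogonal_lower[of "p j" k]
  by (cases "k < j") (auto simp: degree_mops mult.commute)

lemma mops_norm_nonzero: "F (p n * p n) \<noteq> 0"
  using definite mops_nonzero by blast

lemma mops_inner_monic:
  assumes "degree q = n" "lead_coeff q = 1"
  shows "F (p n * q) = F (p n * p n)"
proof -
  have "F (p n * (q - p n)) = 0"
    using degree_diff_smult_lead_less[of q n "p n"] assms degree_mops lead_coeff_mops
    by (intro mops_orthogonal_lower) simp
  then show ?thesis by (simp add: right_diff_distrib diff)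
qed

lemma mops_unique:
  assumes "degree r = n" "lead_coeff r = 1" "\<And>q. degree q < n \<Longrightarrow> F (r * q) = 0"
  shows "r = p n"
proof -
  define d where "d = r - p n"
  have "d = 0 \<or> degree d < n"
    using degree_diff_smult_lead_less[of r n "p n"] assms degree_mops lead_coeff_mops
    unfolding d_def by simp
  then have "F (d * d) = 0"
    using assms(3)[of d] mops_orthogonal_lower[of d n]
    by (auto simp: d_def left_diff_distrib diff)
  then have "d = 0" by (rule definite)
  then show ?thesis by (simp add: d_def)
qed

text \<open>By uniqueness: the reflection of p n, made monic, is again orthogonal to lower degrees.\<close>
lemma mops_reflect: "p n \<circ>\<^sub>p [:0, -1:] = smult ((-1) ^ n) (p n)"
proof -
  define r where "r = smult ((-1) ^ n) (p n \<circ>\<^sub>p [:0, -1:])"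
  have "coeff (p n) n = 1" using lead_coeff_mops[of n] by (simp add: degree_mops)
  then have monic: "degree r = n" "lead_coeff r = 1"
    using lead_coeff_comp[of "[:0, -1:]" "p n"]
    by (simp_all add: r_def degree_pcompose degree_mops lead_coeff_mops mult.left_commute)
  have "F (r * q) = 0" if "degree q < n" for q
  proof -
    have "r * q = smult ((-1) ^ n) ((p n * (q \<circ>\<^sub>p [:0, -1:])) \<circ>\<^sub>p [:0, -1:])"
      by (simp add: r_def pcompose_mult pcompose_assoc[symmetric] pcompose_pCons)
    then show ?thesis
      using that by (simp add: smult reflect_invariant mops_orthogonal_lower degree_pcompose)
  qed
  with monic have "r = p n" by (rule mops_unique)
  then have "smult ((-1) ^ n) r = smult ((-1) ^ n) (p n)" by simp
  then show ?thesis by (simp add: r_def)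
qed

lemma mops_0: "p 0 = 1"
  using degree_mops[of 0] lead_coeff_mops[of 0]
  by (metis degree_0_id one_pCons)

lemma mops_1: "p 1 = [:0, 1:]"
proof -
  have "coeff (p 1) 0 = 0"
    using arg_cong[OF mops_reflect[of 1], of "\<lambda>q. poly q 0"] by (simp add: poly_pcompose poly_0_coeff_0)
  then show ?thesis
    using degree_mops[of 1] lead_coeff_mops[of 1]
    by (intro poly_eqI) (auto simp: coeff_eq_0 coeff_pCons split: nat.split)
qed

lemma eq_0_if_orthogonal_mops:
  assumes "degree r \<le> n" "\<And>k. k \<le> n \<Longrightarrow> F (r * p k) = 0"
  shows "r = 0"
  using assms
proof (induction n arbitrary: r)
  case 0
  then obtain c where r: "r = smult c (p 0)" by (auto simp: mops_0 elim: degree_eq_zeroE)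
  then have "c * F (p 0 * p 0) = 0" using "0.prems"(2)[of 0] by (simp add: smult)
  then show ?case using r mops_norm_nonzero by simp
next
  case (Suc m)
  define r' where "r' = r - smult (coeff r (Suc m)) (p (Suc m))"
  have r'_degree: "degree r' \<le> m"
    using degree_diff_smult_lead_less[of r "Suc m" "p (Suc m)"] Suc.prems(1)
      degree_mops lead_coeff_mops
    by (auto simp: r'_def)
  then have "F (r' * p (Suc m)) = 0"
    using mops_orthogonal_lower[of r' "Suc m"] by (simp add: mult.commute)
  then have "coeff r (Suc m) * F (p (Suc m) * p (Suc m)) = 0"
    using Suc.prems(2)[of "Suc m"] by (simp add: r'_def left_diff_distrib diff smult)
  then have "r' = r" using mops_norm_nonzero by (simp add: r'_def)
  moreover have "F (r' * p k) = 0" if "k \<le> m" for k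
    using Suc.prems(2)[of k] that by (simp add: \<open>r' = r\<close>)
  ultimately show ?case using Suc.IH r'_degree by simp
qed

end

end

locale x_compatible_pair =
  A: symmetric_definite_functional A + B: symmetric_definite_functional B for A B +
  assumes agree_on_x_mult: "B ([:0, 1:] * h) = A ([:0, 1:] * h)"
begin

context
  fixes P Q :: "nat \<Rightarrow> real poly"
  assumes P: "monic_OPS (\<lambda>f g. A (f * g)) P"
    and Q: "monic_OPS (\<lambda>f g. B (f * g)) Q"
begin

lemma inner_mops_x_mult_same_index: "A (P n * ([:0, 1:] * Q n)) = 0"
proof -
  have "(P n * ([:0, 1:] * Q n)) \<circ>\<^sub>p [:0, -1:] = - (P n * ([:0, 1:] * Q n))"
    by (simp add: pcompose_mult pcompose_pCons A.mops_reflect[OF P] B.mops_reflect[OF Q] mult_ac)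
  then show ?thesis by (rule A.odd_eq_0)
qed

lemma inner_mops_x_mult_prev_index:
  assumes "n \<ge> 1"
  shows "A (P n * ([:0, 1:] * Q (n - 1))) = A (P n * P n)"
  using assms B.mops_nonzero[OF Q] B.degree_mops[OF Q] B.lead_coeff_mops[OF Q]
  by (intro A.mops_inner_monic[OF P]) (simp_all add: coeff_pCons split: nat.split)

lemma x_mult_mops_recurrence:
  assumes "n \<ge> 1"
  shows "[:0, 1:] * P n = Q (n + 1) + smult (A (P n * P n) / B (Q (n - 1) * Q (n - 1))) (Q (n - 1))"
proof -
  let ?x = "[:0, 1:] :: real poly"
  define a where "a = A (P n * P n) / B (Q (n - 1) * Q (n - 1))"
  define R where "R = ?x * P n - Q (n + 1) - smult a (Q (n - 1))"
  have "degree (?x * P n) = n + 1" "coeff (?x * P n) (n + 1) = 1"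
    using A.mops_nonzero[OF P] A.degree_mops[OF P] A.lead_coeff_mops[OF P, of n] by simp_all
  then have "degree (?x * P n - Q (n + 1)) \<le> n"
    using degree_diff_smult_lead_less[of "?x * P n" "n + 1" "Q (n + 1)"]
      B.degree_mops[OF Q] B.lead_coeff_mops[OF Q] by auto
  moreover have "degree (smult a (Q (n - 1))) \<le> n"
    using B.degree_mops[OF Q, of "n - 1"] by (auto intro: order.trans[OF degree_smult_le])
  ultimately have R_degree: "degree R \<le> n"
    unfolding R_def by (rule degree_diff_le)
  have "B (R * Q k) = 0" if k: "k \<le> n" for k
  proof -
    have R_inner: "B (R * Q k) = A (P n * (?x * Q k)) - B (Q (n + 1) * Q k) - a * B (Q (n - 1) * Q k)"
      using agree_on_x_mult[of "P n * Q k"]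
      unfolding R_def left_diff_distrib B.diff mult_smult_left B.smult
      by (simp add: mult.assoc mult.left_commute)
    have Q_succ: "B (Q (n + 1) * Q k) = 0" using k by (intro B.mops_orthogonal[OF Q]) simp
    consider "k < n - 1" | "k = n - 1" | "k = n" using k by arith
    then show ?thesis
    proof cases
      case 1
      then have "A (P n * (?x * Q k)) = 0"
        using B.mops_nonzero[OF Q] B.degree_mops[OF Q]
        by (intro A.mops_orthogonal_lower[OF P]) simp
      with 1 show ?thesis using R_inner Q_succ by (simp add: B.mops_orthogonal[OF Q])
    next
      case 2
      then show ?thesis
        using R_inner Q_succ inner_mops_x_mult_prev_index \<open>n \<ge> 1\<close> B.mops_norm_nonzero[OF Q]
        by (simp add: a_def)
    next
      case 3
      then show ?thesis
        using R_inner Q_succ inner_mops_x_mult_same_index \<open>n \<ge> 1\<close>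
        by (simp add: B.mops_orthogonal[OF Q])
    qed
  qed
  then have "R = 0" using B.eq_0_if_orthogonal_mops[OF Q R_degree] by blast
  then show ?thesis by (simp add: R_def a_def algebra_simps)
qed

end

end

definition freud_functional :: "real poly \<Rightarrow> real" where
  "freud_functional h = (\<integral>x. poly h x * exp (- (x ^ 4)) \<partial>lborel)"

definition freud_point_mass_functional :: "real \<Rightarrow> real poly \<Rightarrow> real" where
  "freud_point_mass_functional lam1 h = freud_functional h + lam1 * poly h 0"

lemma inner_F_eq_freud_functional: "inner_F f g = freud_functional (f * g)"
  by (simp add: inner_F_def freud_functional_def)

lemma inner_S_eq_freud_point_mass_functional:
  "inner_S lam1 f g = freud_point_mass_functional lam1 (f * g)"
  by (simp add: inner_S_def freud_point_mass_functional_def inner_F_eq_freud_functional)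

text \<open>Domination by a multiple of the Gaussian, using x^4 \<ge> x^2/2 - 1.\<close>
lemma integrable_power_mult_exp_neg_power4:
  "integrable lborel (\<lambda>x::real. x ^ k * exp (- (x ^ 4)))"
proof (rule Bochner_Integration.integrable_bound)
  let ?g = "\<lambda>x. (exp 1 * sqrt (2 * pi)) * (std_normal_density x * \<bar>x\<bar> ^ k)"
  show "integrable lborel ?g"
    using integrable_std_normal_moment_abs[of k] by simp
  show "(\<lambda>x::real. x ^ k * exp (- (x ^ 4))) \<in> borel_measurable lborel" by measurable
  show "AE x in lborel. norm (x ^ k * exp (- (x ^ 4))) \<le> norm (?g x)"
  proof (rule AE_I2)
    fix x :: real
    have "- (x ^ 4) \<le> 1 + (- x\<^sup>2 / 2)"
      using sum_squares_ge_zero[of "x^2 - 1/4" 0]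
      by (simp add: power2_eq_square power4_eq_xxxx algebra_simps)
    then have "exp (- (x ^ 4)) \<le> exp 1 * exp (- x\<^sup>2 / 2)"
      by (simp add: exp_add[symmetric])
    then have "\<bar>x\<bar> ^ k * exp (- (x ^ 4)) \<le> \<bar>x\<bar> ^ k * (exp 1 * exp (- x\<^sup>2 / 2))"
      by (simp add: mult_left_mono)
    then show "norm (x ^ k * exp (- (x ^ 4))) \<le> norm (?g x)"
      by (simp add: std_normal_density_def abs_mult power_abs mult_ac)
  qed
qed

lemma integrable_poly_mult_exp_neg_power4:
  "integrable lborel (\<lambda>x::real. poly h x * exp (- (x ^ 4)))"
proof -
  have "(\<lambda>x::real. poly h x * exp (- (x ^ 4)))
      = (\<lambda>x. \<Sum>i\<le>degree h. coeff h i * (x ^ i * exp (- (x ^ 4))))"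
    by (simp add: poly_altdef sum_distrib_right mult.assoc)
  then show ?thesis
    by (simp add: integrable_power_mult_exp_neg_power4)
qed

lemma freud_functional_square_nonneg: "freud_functional (f * f) \<ge> 0"
  unfolding freud_functional_def by (intro integral_nonneg_AE AE_I2) auto

lemma freud_functional_square_eq_0:
  assumes "freud_functional (f * f) = 0"
  shows "f = 0"
proof (rule ccontr)
  assume "f \<noteq> 0"
  have "AE x in lborel. poly (f * f) x * exp (- (x ^ 4)) = 0"
    using assms integral_nonneg_eq_0_iff_AE[OF integrable_poly_mult_exp_neg_power4[of "f * f"]]
    unfolding freud_functional_def by auto
  then have "AE x in lborel. x \<in> {x. poly f x = 0}" by auto
  moreover have "AE x in lborel. x \<notin> {x. poly f x = 0}"
    using finite_imp_null_set_lborel[OF poly_roots_finite[OF \<open>f \<noteq> 0\<close>]] AE_not_in by blast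
  ultimately have "AE x::real in lborel. False" by eventually_elim simp
  then show False by (simp add: ae_filter_eq_bot_iff eventually_False)
qed

lemma symmetric_definite_functional_freud: "symmetric_definite_functional freud_functional"
proof
  fix a b f :: "real poly" and c :: real
  show "freud_functional (a + b) = freud_functional a + freud_functional b"
    by (simp add: freud_functional_def distrib_right integrable_poly_mult_exp_neg_power4)
  show "freud_functional (smult c a) = c * freud_functional a"
    by (simp add: freud_functional_def mult.assoc)
  show "freud_functional (a \<circ>\<^sub>p [:0, -1:]) = freud_functional a"
    unfolding freud_functional_def
    by (subst (2) lborel_integral_real_affine[where c="-1" and t=0]) (auto simp: poly_pcompose)
  show "freud_functional (f * f) = 0 \<Longrightarrow> f = 0"
    by (rule freud_functional_square_eq_0)
qed

lemma symmetric_definite_functional_freud_point_mass: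
  assumes "lam1 \<ge> 0"
  shows "symmetric_definite_functional (freud_point_mass_functional lam1)"
proof -
  interpret F: symmetric_definite_functional freud_functional
    by (rule symmetric_definite_functional_freud)
  show ?thesis
  proof
    fix a b f :: "real poly" and c :: real
    show "freud_point_mass_functional lam1 (a + b)
        = freud_point_mass_functional lam1 a + freud_point_mass_functional lam1 b"
      by (simp add: freud_point_mass_functional_def F.add algebra_simps)
    show "freud_point_mass_functional lam1 (smult c a) = c * freud_point_mass_functional lam1 a"
      by (simp add: freud_point_mass_functional_def F.smult algebra_simps)
    show "freud_point_mass_functional lam1 (a \<circ>\<^sub>p [:0, -1:]) = freud_point_mass_functional lam1 a"
      by (simp add: freud_point_mass_functional_def F.reflect_invariant poly_pcompose)
    assume "freud_point_mass_functional lam1 (f * f) = 0"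
    moreover have "lam1 * (poly f 0 * poly f 0) \<ge> 0" using assms by simp
    ultimately have "freud_functional (f * f) = 0"
      using freud_functional_square_nonneg[of f] by (simp add: freud_point_mass_functional_def)
    then show "f = 0" by (rule F.definite)
  qed
qed

theorem mainTheorem2:
  fixes lam1 :: real and P Q :: "nat \<Rightarrow> real poly"
  assumes "lam1 \<ge> 0"
    and "monic_OPS inner_F P"
    and "monic_OPS (inner_S lam1) Q"
  shows "Q 0 = 1 \<and> Q 1 = [:0, 1:] \<and>
    (\<forall>n\<ge>1.
       [:0, 1:] * P n = Q (n + 1)
          + smult (inner_F (P n) (P n) / inner_S lam1 (Q (n - 1)) (Q (n - 1))) (Q (n - 1))
     \<and> [:0, 1:] * Q n = P (n + 1)
          + smult (inner_S lam1 (Q n) (Q n) / inner_F (P (n - 1)) (P (n - 1))) (P (n - 1)))"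
proof -
  have P: "monic_OPS (\<lambda>f g. freud_functional (f * g)) P"
    using assms(2) by (simp add: inner_F_eq_freud_functional[abs_def])
  have Q: "monic_OPS (\<lambda>f g. freud_point_mass_functional lam1 (f * g)) Q"
    using assms(3) by (simp add: inner_S_eq_freud_point_mass_functional[abs_def])
  have F: "symmetric_definite_functional freud_functional"
    and S: "symmetric_definite_functional (freud_point_mass_functional lam1)"
    using symmetric_definite_functional_freud symmetric_definite_functional_freud_point_mass assms(1)
    by blast+
  interpret FS: x_compatible_pair freud_functional "freud_point_mass_functional lam1"
    using F S by (simp add: x_compatible_pair_def x_compatible_pair_axioms_def freud_point_mass_functional_def)
  interpret SF: x_compatible_pair "freud_point_mass_functional lam1" freud_functional
    using F S by (simp add: x_compatible_pair_def x_compatible_pair_axioms_def freud_point_mass_functional_def)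
  show ?thesis
    using FS.B.mops_0[OF Q] FS.B.mops_1[OF Q] FS.x_mult_mops_recurrence[OF P Q]
      SF.x_mult_mops_recurrence[OF Q P]
    by (simp add: inner_F_eq_freud_functional inner_S_eq_freud_point_mass_functional)
qed

end
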